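(* Let $\sigma=\sigma_1\cdots\sigma_k$ be a planar rooted forest (decorated or not) with connected components $\sigma_j=B^+(\tau_j)$, $j=1,\dots,k$, listed from left to right. Then $$\sigma!=|\sigma_1|\cdot|\sigma_1\sigma_2|\cdots|\sigma_1\cdots\sigma_k|\cdot\tau_1!\cdots\tau_k!,$$ where $|\cdot|$ is the number of vertices and $!$ is the planar factorial.
   Context: Planar rooted forests: finite left-to-right ordered sequences of planar rooted trees; $B^+(\tau)$ is the tree obtained by grafting the trees of the planar forest $\tau$, in order, onto a new common root. On vertices, $v<w$ iff $v\neq w$ and $v$ lies on the path from a root to $w$; $\ll$ is the transitive closure of the relation $R$: $vRw$ iff $v<w$, or $v,w$ are children of a common vertex with $v$ to the right of $w$, or $v,w$ are both roots with $v$ to the right of $w$. For a finite poset $P$ and $s<t$, $\Omega^{st}_P=\{(t_v)\in[s,t]^P: t_v\ge t_w \text{ if } v<w\}$ and $P!$ is defined by $\mathrm{Vol}(\Omega^{st}_P)=(t-s)^{|P|}/P!$. The planar factorial is $\sigma!:=(V(\sigma),\ll)!$, with $\emptyset!=1$. *)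

theory Defs
  imports "HOL-Analysis.Analysis"
begin

text \<open>Planar rooted trees, decorated by labels of type 'a (take 'a = unit for
undecorated trees). A planar forest is a list of planar trees (left to right).
Node a ts is B+ of the forest ts (with decoration a at the new root).\<close>
datatype 'a ptree = Node 'a "'a ptree list"

fun children :: "'a ptree \<Rightarrow> 'a ptree list" where
  "children (Node a ts) = ts"

text \<open>Vertices of a forest, encoded as addresses: [i0,i1,...,im] is the vertex reached
from the i0-th root (0 = leftmost) by successively going to the i1-th child, etc.
fv n ts lists vertices of ts whose root indices are offset by n.\<close>
fun fv :: "nat \<Rightarrow> 'a ptree list \<Rightarrow> nat list set" where
  "fv n [] = {}"
| "fv n (Node a cs # ts) = insert [n] ((Cons n) ` fv 0 cs) \<union> fv (Suc n) ts"

definition fverts :: "'a ptree list \<Rightarrow> nat list set" where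
  "fverts \<sigma> = fv 0 \<sigma>"

definition nverts :: "'a ptree list \<Rightarrow> nat" where
  "nverts \<sigma> = card (fverts \<sigma>)"

definition tree_below :: "nat list \<Rightarrow> nat list \<Rightarrow> bool" where
  "tree_below v w \<longleftrightarrow> (\<exists>u. u \<noteq> [] \<and> w = v @ u)"

text \<open>The relation R: v < w, or v and w are siblings (children of a common vertex,
or both roots) with v to the right of w.\<close>
definition relR :: "nat list \<Rightarrow> nat list \<Rightarrow> bool" where
  "relR v w \<longleftrightarrow> tree_below v w \<or> (\<exists>p i j. v = p @ [i] \<and> w = p @ [j] \<and> j < i)"

definition planar_order :: "'a ptree list \<Rightarrow> (nat list \<times> nat list) set" where
  "planar_order \<sigma> = {(v, w). v \<in> fverts \<sigma> \<and> w \<in> fverts \<sigma> \<and> relR v w}\<^sup>+"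

text \<open>Poset factorial: P! with Vol(\<Omega>^{st}_P) = (t-s)^|P| / P!; taken with s = 0, t = 1,
where \<Omega> is the order polytope in [0,1]^P (points indexed by the carrier V) and the
volume is the Lebesgue (product) measure on V \<rightarrow> real.\<close>
definition order_polytope :: "'v set \<Rightarrow> ('v \<times> 'v) set \<Rightarrow> real \<Rightarrow> real \<Rightarrow> ('v \<Rightarrow> real) set" where
  "order_polytope V r s t =
     {x \<in> V \<rightarrow>\<^sub>E {s..t}. \<forall>v\<in>V. \<forall>w\<in>V. (v, w) \<in> r \<longrightarrow> x w \<le> x v}"

definition poset_factorial :: "'v set \<Rightarrow> ('v \<times> 'v) set \<Rightarrow> real" where
  "poset_factorial V r = 1 / measure (PiM V (\<lambda>_. lborel)) (order_polytope V r 0 1)"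

definition planar_factorial :: "'a ptree list \<Rightarrow> real" where
  "planar_factorial \<sigma> = poset_factorial (fverts \<sigma>) (planar_order \<sigma>)"

end

theory Submission
  imports Defs
begin

text \<open>The root of the last tree \<sigma>_k lies to the right of all other roots, so it precedes every
  other vertex in \<ll>: its coordinate y is the largest one, and the remaining vertices split into
  the forest \<sigma>_1\<dots>\<sigma>_{k-1} and the forest \<tau>_k, which are \<ll>-incomparable. Hence the order
  polytope of \<sigma> fibres over y \<in> [0,1] into the product of the order polytopes of these two
  forests scaled to [0,y]. By homogeneity these have volumes y^|P|/P!, and integrating over y gives
  \<sigma>! = |\<sigma>| (\<sigma>_1\<dots>\<sigma>_{k-1})! \<tau>_k!; induction on k finishes the proof.\<close>

lemma sets_order_polytope:
  assumes "finite V"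
  shows "order_polytope V r s t \<in> sets (Pi\<^sub>M V (\<lambda>_. lborel))"
proof -
  have [measurable]: "Measurable.pred (Pi\<^sub>M V (\<lambda>_. lborel)) (\<lambda>x. x w \<le> (x v :: real))"
    if "v \<in> V" "w \<in> V" for v w
    unfolding pred_def using that
    by (intro borel_measurable_le) (auto simp: measurable_lborel2)
  have "order_polytope V r s t = {x \<in> space (Pi\<^sub>M V (\<lambda>_. lborel)).
          (\<forall>v\<in>V. s \<le> x v \<and> x v \<le> t) \<and> (\<forall>v\<in>V. \<forall>w\<in>V. (v, w) \<in> r \<longrightarrow> x w \<le> x v)}"
    by (auto simp: order_polytope_def space_PiM PiE_def)
  also have "\<dots> \<in> sets (Pi\<^sub>M V (\<lambda>_. lborel))"
    using assms by measurable
  finally show ?thesis .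
qed

lemma order_polytope_empty: "order_polytope {} r s t = {\<lambda>_. undefined}"
  unfolding order_polytope_def by auto

lemma order_polytope_restrict_relation:
  "order_polytope V r s t = order_polytope V (r \<inter> V \<times> V) s t"
  unfolding order_polytope_def by blast

lemma sets_PiM_restrict_conj:
  assumes "P \<in> sets (Pi\<^sub>M A M)" "Q \<in> sets (Pi\<^sub>M B M)" "A \<subseteq> I" "B \<subseteq> I"
  shows "{x \<in> space (Pi\<^sub>M I M). restrict x A \<in> P \<and> restrict x B \<in> Q} \<in> sets (Pi\<^sub>M I M)"
proof -
  have "{x \<in> space (Pi\<^sub>M I M). restrict x A \<in> P \<and> restrict x B \<in> Q}
      = ((\<lambda>x. restrict x A) -` P \<inter> space (Pi\<^sub>M I M)) \<inter> ((\<lambda>x. restrict x B) -` Q \<inter> space (Pi\<^sub>M I M))"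
    by auto
  also have "\<dots> \<in> sets (Pi\<^sub>M I M)"
    using assms by (intro sets.Int measurable_sets[OF measurable_restrict_subset])
  finally show ?thesis .
qed

lemma (in product_sigma_finite) emeasure_PiM_restrict_Un:
  assumes "finite A" "finite B" "A \<inter> B = {}"
    and [measurable]: "P \<in> sets (Pi\<^sub>M A M)" "Q \<in> sets (Pi\<^sub>M B M)"
  shows "emeasure (Pi\<^sub>M (A \<union> B) M)
           {x \<in> space (Pi\<^sub>M (A \<union> B) M). restrict x A \<in> P \<and> restrict x B \<in> Q}
         = emeasure (Pi\<^sub>M A M) P * emeasure (Pi\<^sub>M B M) Q"
proof -
  interpret B: finite_product_sigma_finite M B by standard (rule assms)
  let ?S = "{x \<in> space (Pi\<^sub>M (A \<union> B) M). restrict x A \<in> P \<and> restrict x B \<in> Q}"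
  have S: "?S \<in> sets (Pi\<^sub>M (A \<union> B) M)"
    using assms(4,5) by (rule sets_PiM_restrict_conj) auto
  have "merge A B -` ?S \<inter> space (Pi\<^sub>M A M \<Otimes>\<^sub>M Pi\<^sub>M B M) = P \<times> Q"
  proof (intro set_eqI iffI)
    fix ab assume "ab \<in> merge A B -` ?S \<inter> space (Pi\<^sub>M A M \<Otimes>\<^sub>M Pi\<^sub>M B M)"
    then show "ab \<in> P \<times> Q"
      using assms(3) by (cases ab) (auto simp: space_pair_measure space_PiM PiE_restrict)
  next
    fix ab assume "ab \<in> P \<times> Q"
    moreover have "P \<subseteq> space (Pi\<^sub>M A M)" "Q \<subseteq> space (Pi\<^sub>M B M)"
      using assms(4,5) by (simp_all add: sets.sets_into_space)
    ultimately show "ab \<in> merge A B -` ?S \<inter> space (Pi\<^sub>M A M \<Otimes>\<^sub>M Pi\<^sub>M B M)"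
      using assms(3) by (cases ab) (auto simp: space_pair_measure space_PiM PiE_restrict)
  qed
  moreover have "emeasure (Pi\<^sub>M (A \<union> B) M) ?S
      = emeasure (Pi\<^sub>M A M \<Otimes>\<^sub>M Pi\<^sub>M B M) (merge A B -` ?S \<inter> space (Pi\<^sub>M A M \<Otimes>\<^sub>M Pi\<^sub>M B M))"
    using S by (subst distr_merge[OF assms(3,1,2), symmetric]) (simp add: emeasure_distr)
  ultimately show ?thesis
    by (simp add: B.emeasure_pair_measure_Times)
qed

lemma order_polytope_insert_top_iff:
  assumes m: "m \<notin> A \<union> B" and x: "x \<in> (A \<union> B) \<rightarrow>\<^sub>E UNIV"
    and top: "\<And>w. w \<in> A \<union> B \<Longrightarrow> (m, w) \<in> r"
    and maximal: "\<And>v. (v, m) \<notin> r"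
    and incomparable: "\<And>v w. v \<in> A \<Longrightarrow> w \<in> B \<Longrightarrow> (v, w) \<notin> r \<and> (w, v) \<notin> r"
  shows "x(m := y) \<in> order_polytope (insert m (A \<union> B)) r s t \<longleftrightarrow>
           y \<in> {s..t} \<and> restrict x A \<in> order_polytope A r s y \<and> restrict x B \<in> order_polytope B r s y"
    (is "?lhs \<longleftrightarrow> ?rhs")
proof
  assume lhs: ?lhs
  have range: "(x(m := y)) v \<in> {s..t}" if "v \<in> insert m (A \<union> B)" for v
    using lhs that unfolding order_polytope_def by blast
  have order: "(x(m := y)) w \<le> (x(m := y)) v"
    if "v \<in> insert m (A \<union> B)" "w \<in> insert m (A \<union> B)" "(v, w) \<in> r" for v w
    using lhs that unfolding order_polytope_def by blast
  have "y \<in> {s..t}"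
    using range[of m] by simp
  moreover have "x w \<le> y" "s \<le> x w" if "w \<in> A \<union> B" for w
    using order[of m w] range[of w] top[OF that] that m by (auto split: if_splits)
  moreover have "x w \<le> x v" if "v \<in> A \<union> B" "w \<in> A \<union> B" "(v, w) \<in> r" for v w
    using order[of v w] that m by (auto split: if_splits)
  ultimately show ?rhs
    unfolding order_polytope_def by auto
next
  assume ?rhs
  then show ?lhs
    using x m maximal incomparable unfolding order_polytope_def PiE_iff by auto
qed

lemma emeasure_order_polytope_insert_top:
  assumes fin: "finite A" "finite B" and disj: "A \<inter> B = {}" and m: "m \<notin> A \<union> B"
    and top: "\<And>w. w \<in> A \<union> B \<Longrightarrow> (m, w) \<in> r"
    and maximal: "\<And>v. (v, m) \<notin> r"
    and incomparable: "\<And>v w. v \<in> A \<Longrightarrow> w \<in> B \<Longrightarrow> (v, w) \<notin> r \<and> (w, v) \<notin> r"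
  shows "emeasure (Pi\<^sub>M (insert m (A \<union> B)) (\<lambda>_. lborel)) (order_polytope (insert m (A \<union> B)) r s t)
     = (\<integral>\<^sup>+ y. indicator {s..t} y * (emeasure (Pi\<^sub>M A (\<lambda>_. lborel)) (order_polytope A r s y)
          * emeasure (Pi\<^sub>M B (\<lambda>_. lborel)) (order_polytope B r s y)) \<partial>lborel)"
proof -
  interpret product_sigma_finite "\<lambda>_. lborel :: real measure" by standard
  let ?M = "\<lambda>V. Pi\<^sub>M V (\<lambda>_. lborel :: real measure)"
  let ?W = "insert m (A \<union> B)"
  define T where "T y = {x \<in> space (?M (A \<union> B)).
    restrict x A \<in> order_polytope A r s y \<and> restrict x B \<in> order_polytope B r s y}" for y
  have T: "emeasure (?M (A \<union> B)) (T y)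
      = emeasure (?M A) (order_polytope A r s y) * emeasure (?M B) (order_polytope B r s y)" for y
    unfolding T_def using fin disj by (intro emeasure_PiM_restrict_Un sets_order_polytope)
  have sets_T: "T y \<in> sets (?M (A \<union> B))" for y
    unfolding T_def using fin by (intro sets_PiM_restrict_conj sets_order_polytope) auto
  have "emeasure (?M ?W) (order_polytope ?W r s t) = (\<integral>\<^sup>+ x. indicator (order_polytope ?W r s t) x \<partial>?M ?W)"
    using fin by (simp add: sets_order_polytope)
  also have "\<dots> = (\<integral>\<^sup>+ y. \<integral>\<^sup>+ x. indicator (order_polytope ?W r s t) (x(m := y)) \<partial>?M (A \<union> B) \<partial>lborel)"
    using fin m sets_order_polytope[of ?W r s t]
    by (intro product_nn_integral_insert_rev borel_measurable_indicator) auto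
  also have "\<dots> = (\<integral>\<^sup>+ y. \<integral>\<^sup>+ x. indicator {s..t} y * indicator (T y) x \<partial>?M (A \<union> B) \<partial>lborel)"
    using order_polytope_insert_top_iff[OF m _ top maximal incomparable]
    by (intro nn_integral_cong) (auto simp: T_def indicator_def space_PiM)
  also have "\<dots> = (\<integral>\<^sup>+ y. indicator {s..t} y * emeasure (?M (A \<union> B)) (T y) \<partial>lborel)"
    using sets_T by (simp add: nn_integral_cmult)
  finally show ?thesis
    by (simp add: T)
qed

lemma nn_integral_power_Icc:
  assumes "0 \<le> t"
  shows "(\<integral>\<^sup>+ y. ennreal (y ^ n) * indicator {0..t} y \<partial>lborel) = ennreal (t ^ Suc n / Suc n)"
proof -
  have "(\<integral>\<^sup>+ y. ennreal (y ^ n) * indicator {0..t} y \<partial>lborel)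
      = ennreal (t ^ Suc n / Suc n - 0 ^ Suc n / Suc n)"
  proof (rule nn_integral_FTC_Icc)
    show "((\<lambda>y. y ^ Suc n / Suc n) has_real_derivative y ^ n) (at y)" for y :: real
      using DERIV_cdivide[OF DERIV_pow[of "Suc n" y], of "Suc n"] by (simp del: of_nat_Suc)
  qed (use assms in auto)
  then show ?thesis
    by simp
qed

lemma fv_append: "fv n (xs @ ys) = fv n xs \<union> fv (n + length xs) ys"
proof (induction xs arbitrary: n)
  case (Cons t xs)
  then show ?case
    by (cases t) auto
qed simp

lemma fv_finite: "finite (fv n ts)"
  by (induction n ts rule: fv.induct) auto

lemma fv_hd: "v \<in> fv n ts \<Longrightarrow> \<exists>h u. v = h # u \<and> n \<le> h \<and> h < n + length ts"
proof (induction ts arbitrary: n v)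
  case (Cons t ts)
  then show ?case
    by (cases t) force
qed simp

lemma fv_prefix_closed: "p @ [j] @ u \<in> fv n ts \<Longrightarrow> p @ [j] \<in> fv n ts"
proof (induction n ts arbitrary: p rule: fv.induct)
  case (2 n a cs ts)
  show ?case
  proof (cases p)
    case Nil
    then show ?thesis
      using "2.prems" "2.IH"(2)[of "[]"] by auto
  next
    case (Cons h p')
    then show ?thesis
      using "2.prems" "2.IH"(1)[of p'] "2.IH"(2)[of p] by auto
  qed
qed simp

lemma finite_fverts: "finite (fverts \<sigma>)"
  by (simp add: fverts_def fv_finite)

lemma fverts_hd: "v \<in> fverts \<sigma> \<Longrightarrow> \<exists>h u. v = h # u \<and> h < length \<sigma>"
  unfolding fverts_def using fv_hd by fastforce

lemma fverts_snoc:
  "fverts (\<sigma> @ [Node a cs]) = insert [length \<sigma>] (fverts \<sigma> \<union> Cons (length \<sigma>) ` fverts cs)"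
  by (auto simp: fverts_def fv_append)

lemma fverts_nonempty_address: "v \<in> fverts \<sigma> \<Longrightarrow> v \<noteq> []"
  using fverts_hd by blast

text \<open>Closed form of \<ll>: for v = p i, v \<ll> w iff w is a proper descendant of v, or w is (a
  descendant of) a sibling p j of v lying to its left, j < i.\<close>
definition planar_less :: "nat list \<Rightarrow> nat list \<Rightarrow> bool" where
  "planar_less v w \<longleftrightarrow> (\<exists>p i j u. v = p @ [i] \<and> w = p @ [j] @ u \<and> j \<le> i \<and> (j < i \<or> u \<noteq> []))"

definition planar_rel :: "nat list set \<Rightarrow> (nat list \<times> nat list) set" where
  "planar_rel V = {(v, w). v \<in> V \<and> w \<in> V \<and> planar_less v w}"

lemma planar_rel_Int: "A \<subseteq> V \<Longrightarrow> planar_rel V \<inter> A \<times> A = planar_rel A"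
  unfolding planar_rel_def by blast

lemma not_planar_less_self: "\<not> planar_less v v"
  unfolding planar_less_def by auto

lemma not_planar_less_Nil: "\<not> planar_less v []" "\<not> planar_less [] w"
  unfolding planar_less_def by auto

lemma planar_less_Cons_diff: "planar_less (x # a) (y # b) \<Longrightarrow> x \<noteq> y \<Longrightarrow> a = [] \<and> y < x"
  unfolding planar_less_def by (auto simp: Cons_eq_append_conv)

lemma planar_less_Cons_same: "a \<noteq> [] \<Longrightarrow> planar_less (x # a) (x # b) \<longleftrightarrow> planar_less a b"
proof
  assume "a \<noteq> []" and "planar_less (x # a) (x # b)"
  then obtain p i j u where "x # a = p @ [i]" "x # b = p @ [j] @ u" "j \<le> i" "j < i \<or> u \<noteq> []"
    and "p \<noteq> []"
    unfolding planar_less_def by (metis append_Nil list.inject)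
  then show "planar_less a b"
    unfolding planar_less_def by (cases p) auto
next
  assume "planar_less a b"
  then show "planar_less (x # a) (x # b)"
    unfolding planar_less_def by (metis append_Cons)
qed

lemma planar_less_append_same: "a \<noteq> [] \<Longrightarrow> planar_less (q @ a) (q @ b) \<longleftrightarrow> planar_less a b"
  by (induction q) (auto simp: planar_less_Cons_same)

lemma planar_less_trans:
  assumes "planar_less u v" "planar_less v w"
  shows "planar_less u w"
proof -
  obtain p i j z where u: "u = p @ [i]" and v: "v = p @ [j] @ z" and "j \<le> i" "j < i \<or> z \<noteq> []"
    using assms(1) unfolding planar_less_def by blast
  obtain p' i' j' z' where v': "v = p' @ [i']" and w: "w = p' @ [j'] @ z'" and "j' \<le> i'" "j' < i' \<or> z' \<noteq> []"
    using assms(2) unfolding planar_less_def by blast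
  show ?thesis
  proof (cases "z = []")
    case True
    then have "p' = p" "i' = j"
      using v v' by auto
    then show ?thesis
      unfolding planar_less_def using u w \<open>j \<le> i\<close> \<open>j' \<le> i'\<close> \<open>j' < i' \<or> z' \<noteq> []\<close> \<open>j < i \<or> z \<noteq> []\<close> True
      by (intro exI[of _ p] exI[of _ i] exI[of _ j'] exI[of _ z']) auto
  next
    case False
    then have "p' = p @ [j] @ butlast z"
      using v v' by (metis append_assoc append_butlast_last_id append1_eq_conv)
    then show ?thesis
      unfolding planar_less_def using u w \<open>j \<le> i\<close>
      by (intro exI[of _ p] exI[of _ i] exI[of _ j] exI[of _ "butlast z @ [j'] @ z'"]) auto
  qed
qed

lemma relR_imp_planar_less: "v \<noteq> [] \<Longrightarrow> relR v w \<Longrightarrow> planar_less v w"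
  unfolding relR_def tree_below_def planar_less_def
proof (elim disjE exE conjE)
  fix u assume "v \<noteq> []" "u \<noteq> []" "w = v @ u"
  then show "\<exists>p i j u. v = p @ [i] \<and> w = p @ [j] @ u \<and> j \<le> i \<and> (j < i \<or> u \<noteq> [])"
    by (intro exI[of _ "butlast v"] exI[of _ "last v"] exI[of _ "last v"] exI[of _ u]) auto
qed auto

lemma planar_order_eq_planar_rel: "planar_order \<sigma> = planar_rel (fverts \<sigma>)"
proof
  let ?R = "{(v, w). v \<in> fverts \<sigma> \<and> w \<in> fverts \<sigma> \<and> relR v w}"
  show "planar_order \<sigma> \<subseteq> planar_rel (fverts \<sigma>)"
  proof safe
    fix v w assume "(v, w) \<in> planar_order \<sigma>"
    then show "(v, w) \<in> planar_rel (fverts \<sigma>)"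
      unfolding planar_order_def
    proof (induction rule: trancl_induct)
      case (base w)
      then show ?case
        using relR_imp_planar_less fverts_nonempty_address unfolding planar_rel_def by auto
    next
      case (step w z)
      then show ?case
        using relR_imp_planar_less fverts_nonempty_address planar_less_trans
        unfolding planar_rel_def by blast
    qed
  qed
  show "planar_rel (fverts \<sigma>) \<subseteq> planar_order \<sigma>"
  proof safe
    fix v w assume vw: "(v, w) \<in> planar_rel (fverts \<sigma>)"
    then obtain p i j u where v: "v = p @ [i]" and w: "w = p @ [j] @ u" and "j \<le> i" "j < i \<or> u \<noteq> []"
      unfolding planar_rel_def planar_less_def by blast
    have "p @ [j] \<in> fverts \<sigma>"
      using vw w fv_prefix_closed unfolding planar_rel_def fverts_def by blast
    moreover have "(v, p @ [j]) \<in> ?R" if "j < i"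
      using that vw v \<open>p @ [j] \<in> fverts \<sigma>\<close> unfolding planar_rel_def relR_def by blast
    moreover have "(p @ [j], w) \<in> ?R" if "u \<noteq> []"
      using that vw w \<open>p @ [j] \<in> fverts \<sigma>\<close> unfolding planar_rel_def relR_def tree_below_def by auto
    ultimately have "(v, w) \<in> ?R\<^sup>+"
      using v w \<open>j \<le> i\<close> \<open>j < i \<or> u \<noteq> []\<close>
      by (cases "u = []"; cases "j < i") (auto intro: trancl_into_trancl2)
    then show "(v, w) \<in> planar_order \<sigma>"
      unfolding planar_order_def .
  qed
qed

text \<open>In a forest, the vertices strictly above the k-th root are fverts_at [k] of its children.\<close>

definition fverts_at :: "nat list \<Rightarrow> 'a ptree list \<Rightarrow> nat list set" where
  "fverts_at q \<sigma> = (append q) ` fverts \<sigma>"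

lemma fverts_at_Nil_address: "fverts_at [] \<sigma> = fverts \<sigma>"
  by (simp add: fverts_at_def)

lemma fverts_at_Nil_forest: "fverts_at q [] = {}"
  by (simp add: fverts_at_def fverts_def)

lemma finite_fverts_at: "finite (fverts_at q \<sigma>)"
  by (simp add: fverts_at_def finite_fverts)

lemma card_fverts_at: "card (fverts_at q \<sigma>) = nverts \<sigma>"
  unfolding fverts_at_def nverts_def by (rule card_image) (simp add: inj_on_def)

lemma fverts_at_snoc:
  "fverts_at q (\<sigma> @ [Node a cs])
     = insert (q @ [length \<sigma>]) (fverts_at q \<sigma> \<union> fverts_at (q @ [length \<sigma>]) cs)"
  unfolding fverts_at_def fverts_snoc by (auto simp: image_image)

lemma fverts_at_hd: "v \<in> fverts_at q \<sigma> \<Longrightarrow> \<exists>h u. v = q @ h # u \<and> h < length \<sigma>"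
  unfolding fverts_at_def using fverts_hd by blast

lemma fverts_at_below: "w \<in> fverts_at (q @ [k]) cs \<Longrightarrow> \<exists>u. w = q @ k # u \<and> u \<noteq> []"
  unfolding fverts_at_def using fverts_nonempty_address by fastforce

lemma fverts_at_snoc_disjoint:
  "fverts_at q \<sigma> \<inter> fverts_at (q @ [length \<sigma>]) cs = {}"
  "q @ [length \<sigma>] \<notin> fverts_at q \<sigma> \<union> fverts_at (q @ [length \<sigma>]) cs"
  using fverts_at_hd[of _ q \<sigma>] fverts_at_below[of _ q "length \<sigma>" cs] by fastforce+

lemma nverts_snoc: "nverts (\<sigma> @ [Node a cs]) = Suc (nverts \<sigma> + nverts cs)"
  using fverts_at_snoc[of "[]" \<sigma> a cs] fverts_at_snoc_disjoint[of "[]" \<sigma> cs]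
    card_fverts_at[of "[]" "\<sigma> @ [Node a cs]"] card_fverts_at[of "[]" \<sigma>] card_fverts_at[of "[length \<sigma>]" cs]
  by (simp add: card_Un_disjoint finite_fverts_at)

lemma planar_less_last_root:
  assumes "w \<in> fverts_at q \<sigma> \<union> fverts_at (q @ [length \<sigma>]) cs"
  shows "planar_less (q @ [length \<sigma>]) w"
proof -
  have "planar_less [length \<sigma>] (drop (length q) w)"
    using assms fverts_at_hd[of w q \<sigma>] fverts_at_below[of w q "length \<sigma>" cs]
    unfolding planar_less_def by (auto intro!: exI[of _ "[]"])
  moreover have "w = q @ drop (length q) w"
    using assms fverts_at_hd[of w q \<sigma>] fverts_at_below[of w q "length \<sigma>" cs] by auto
  ultimately show ?thesis
    by (metis planar_less_append_same not_Cons_self2)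
qed

lemma not_planar_less_last_root:
  assumes "v \<in> fverts_at q (\<sigma> @ [Node a cs])"
  shows "\<not> planar_less v (q @ [length \<sigma>])"
proof
  assume less: "planar_less v (q @ [length \<sigma>])"
  obtain h u where v: "v = q @ h # u" and "h < length (\<sigma> @ [Node a cs])"
    using assms fverts_at_hd by blast
  then have "h \<le> length \<sigma>"
    by simp
  have "planar_less (h # u) [length \<sigma>]"
    using less v planar_less_append_same[of "h # u" q "[length \<sigma>]"] by simp
  show False
  proof (cases "h = length \<sigma>")
    case True
    then show False
      using \<open>planar_less (h # u) [length \<sigma>]\<close> not_planar_less_self not_planar_less_Nil(1)
        planar_less_Cons_same[of u h "[]"]
      by (cases "u = []") auto
  next
    case False
    then show False
      using \<open>planar_less (h # u) [length \<sigma>]\<close> \<open>h \<le> length \<sigma>\<close> planar_less_Cons_diff[of h u "length \<sigma>" "[]"]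
      by simp
  qed
qed

lemma planar_incomparable_last_tree:
  assumes "v \<in> fverts_at q \<sigma>" "w \<in> fverts_at (q @ [length \<sigma>]) cs"
  shows "\<not> planar_less v w \<and> \<not> planar_less w v"
proof -
  obtain h u where v: "v = q @ h # u" "h < length \<sigma>"
    using assms(1) fverts_at_hd by blast
  obtain u' where w: "w = q @ length \<sigma> # u'" "u' \<noteq> []"
    using assms(2) fverts_at_below by blast
  show ?thesis
    using planar_less_Cons_diff[of h u "length \<sigma>" u'] planar_less_Cons_diff[of "length \<sigma>" u' h u]
      planar_less_append_same[of "h # u" q] planar_less_append_same[of "length \<sigma> # u'" q] v w
    by auto
qed

definition planar_volume_at :: "nat list \<Rightarrow> 'a ptree list \<Rightarrow> real \<Rightarrow> ennreal" where
  "planar_volume_at q \<sigma> t = emeasure (Pi\<^sub>M (fverts_at q \<sigma>) (\<lambda>_. lborel))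
     (order_polytope (fverts_at q \<sigma>) (planar_rel (fverts_at q \<sigma>)) 0 t)"

definition planar_volume :: "'a ptree list \<Rightarrow> real" where
  "planar_volume \<sigma> = measure (Pi\<^sub>M (fverts \<sigma>) (\<lambda>_. lborel)) (order_polytope (fverts \<sigma>) (planar_order \<sigma>) 0 1)"

lemma planar_factorial_eq_inverse_volume: "planar_factorial \<sigma> = 1 / planar_volume \<sigma>"
  unfolding planar_factorial_def poset_factorial_def planar_volume_def ..

lemma planar_volume_eq: "planar_volume \<sigma> = enn2real (planar_volume_at [] \<sigma> 1)"
  unfolding planar_volume_def planar_volume_at_def measure_def
  by (simp add: fverts_at_Nil_address planar_order_eq_planar_rel)

lemma planar_volume_at_snoc_integral:
  "planar_volume_at q (\<sigma> @ [Node a cs]) t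
     = (\<integral>\<^sup>+ y. indicator {0..t} y * (planar_volume_at q \<sigma> y * planar_volume_at (q @ [length \<sigma>]) cs y) \<partial>lborel)"
proof -
  define A where "A = fverts_at q \<sigma>"
  define B where "B = fverts_at (q @ [length \<sigma>]) cs"
  define W where "W = fverts_at q (\<sigma> @ [Node a cs])"
  have W: "W = insert (q @ [length \<sigma>]) (A \<union> B)"
    unfolding W_def A_def B_def by (rule fverts_at_snoc)
  have restrict: "order_polytope V (planar_rel W) 0 y = order_polytope V (planar_rel V) 0 y"
    if "V \<subseteq> W" for V and y :: real
    using order_polytope_restrict_relation planar_rel_Int[OF that] by metis
  have "A \<subseteq> W" "B \<subseteq> W"
    by (auto simp: W)
  have "planar_volume_at q (\<sigma> @ [Node a cs]) t = emeasure (Pi\<^sub>M W (\<lambda>_. lborel)) (order_polytope W (planar_rel W) 0 t)"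
    unfolding planar_volume_at_def W_def ..
  also have "\<dots> = (\<integral>\<^sup>+ y. indicator {0..t} y * (emeasure (Pi\<^sub>M A (\<lambda>_. lborel)) (order_polytope A (planar_rel W) 0 y)
          * emeasure (Pi\<^sub>M B (\<lambda>_. lborel)) (order_polytope B (planar_rel W) 0 y)) \<partial>lborel)"
    unfolding W
  proof (rule emeasure_order_polytope_insert_top)
    show "finite A" "finite B"
      by (simp_all add: A_def B_def finite_fverts_at)
    show "A \<inter> B = {}" "q @ [length \<sigma>] \<notin> A \<union> B"
      unfolding A_def B_def by (rule fverts_at_snoc_disjoint)+
    show "(q @ [length \<sigma>], w) \<in> planar_rel (insert (q @ [length \<sigma>]) (A \<union> B))" if "w \<in> A \<union> B" for w
      using that planar_less_last_root[of w q \<sigma> cs] unfolding A_def B_def planar_rel_def by simp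
    show "(v, q @ [length \<sigma>]) \<notin> planar_rel (insert (q @ [length \<sigma>]) (A \<union> B))" for v
      using not_planar_less_last_root[of v q \<sigma> a cs] W unfolding W_def planar_rel_def by auto
    show "(v, w) \<notin> planar_rel (insert (q @ [length \<sigma>]) (A \<union> B)) \<and> (w, v) \<notin> planar_rel (insert (q @ [length \<sigma>]) (A \<union> B))"
      if "v \<in> A" "w \<in> B" for v w
      using that planar_incomparable_last_tree[of v q \<sigma> w cs] unfolding A_def B_def planar_rel_def by simp
  qed
  also have "\<dots> = (\<integral>\<^sup>+ y. indicator {0..t} y * (planar_volume_at q \<sigma> y * planar_volume_at (q @ [length \<sigma>]) cs y) \<partial>lborel)"
    unfolding planar_volume_at_def A_def[symmetric] B_def[symmetric]
    by (simp only: restrict[OF \<open>A \<subseteq> W\<close>] restrict[OF \<open>B \<subseteq> W\<close>])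
  finally show ?thesis .
qed

lemma planar_volume_at_snoc:
  assumes \<sigma>: "\<And>q t. 0 \<le> t \<Longrightarrow> planar_volume_at q \<sigma> t = ennreal (t ^ nverts \<sigma> * c)"
    and cs: "\<And>q t. 0 \<le> t \<Longrightarrow> planar_volume_at q cs t = ennreal (t ^ nverts cs * d)"
    and "0 \<le> c" "0 \<le> d" "0 \<le> t"
  shows "planar_volume_at q (\<sigma> @ [Node a cs]) t
           = ennreal (t ^ nverts (\<sigma> @ [Node a cs]) * (c * d / nverts (\<sigma> @ [Node a cs])))"
proof -
  define n where "n = nverts \<sigma> + nverts cs"
  have factors: "indicator {0..t} y * (planar_volume_at q \<sigma> y * planar_volume_at (q @ [length \<sigma>]) cs y)
      = ennreal (c * d * y ^ n) * indicator {0..t} y" for y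
    using \<sigma>[of y q] cs[of y "q @ [length \<sigma>]"] \<open>0 \<le> c\<close> \<open>0 \<le> d\<close>
    by (cases "y \<in> {0..t}") (auto simp: n_def power_add ennreal_mult'[symmetric] mult_ac)
  have "planar_volume_at q (\<sigma> @ [Node a cs]) t = (\<integral>\<^sup>+ y. ennreal (c * d * y ^ n) * indicator {0..t} y \<partial>lborel)"
    by (simp only: planar_volume_at_snoc_integral factors)
  also have "\<dots> = ennreal (c * d) * ennreal (t ^ Suc n / Suc n)"
    using \<open>0 \<le> c\<close> \<open>0 \<le> d\<close> \<open>0 \<le> t\<close>
    by (simp add: ennreal_mult' nn_integral_cmult nn_integral_power_Icc mult.assoc)
  also have "\<dots> = ennreal (t ^ Suc n * (c * d / Suc n))"
    using \<open>0 \<le> c\<close> \<open>0 \<le> d\<close> by (simp add: ennreal_mult'[symmetric] mult_ac)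
  finally show ?thesis
    by (simp add: nverts_snoc n_def)
qed

lemma planar_volume_nonneg: "0 \<le> planar_volume \<sigma>"
  by (simp add: planar_volume_def)

lemma planar_volume_at_eq:
  "0 \<le> t \<Longrightarrow> planar_volume_at q \<sigma> t = ennreal (t ^ nverts \<sigma> * planar_volume \<sigma>)"
  \<comment> \<open>generalised over q because the induction passes to the children of the last root\<close>
proof (induction \<sigma> arbitrary: q t rule: measure_induct_rule[of "size_list size"])
  case (less \<sigma>)
  show ?case
  proof (cases \<sigma> rule: rev_exhaust)
    case Nil
    then show ?thesis
      by (simp add: planar_volume_eq planar_volume_at_def fverts_at_Nil_forest order_polytope_empty
          nverts_def fverts_def)
  next
    case (snoc \<sigma>' t')
    obtain a cs where \<sigma>: "\<sigma> = \<sigma>' @ [Node a cs]"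
      using snoc by (cases t') auto
    let ?c = "planar_volume \<sigma>' * planar_volume cs / nverts \<sigma>"
    have IH: "\<And>q t. 0 \<le> t \<Longrightarrow> planar_volume_at q \<sigma>' t = ennreal (t ^ nverts \<sigma>' * planar_volume \<sigma>')"
      "\<And>q t. 0 \<le> t \<Longrightarrow> planar_volume_at q cs t = ennreal (t ^ nverts cs * planar_volume cs)"
      using less.IH \<sigma> by auto
    have "planar_volume_at q \<sigma> t = ennreal (t ^ nverts \<sigma> * ?c)" if "0 \<le> t" for q t
      unfolding \<sigma> by (rule planar_volume_at_snoc[OF IH]) (simp_all add: that planar_volume_nonneg)
    moreover from this[of 1 "[]"] have "planar_volume \<sigma> = ?c"
      using planar_volume_nonneg by (simp add: planar_volume_eq)
    ultimately show ?thesis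
      using less.prems by simp
  qed
qed

lemma planar_volume_snoc:
  "planar_volume (\<sigma> @ [Node a cs]) = planar_volume \<sigma> * planar_volume cs / nverts (\<sigma> @ [Node a cs])"
proof -
  have "planar_volume_at [] (\<sigma> @ [Node a cs]) 1
      = ennreal (planar_volume \<sigma> * planar_volume cs / nverts (\<sigma> @ [Node a cs]))"
    using planar_volume_at_snoc[OF planar_volume_at_eq planar_volume_at_eq, where t = 1]
    by (simp add: planar_volume_nonneg)
  then show ?thesis
    using planar_volume_nonneg by (simp add: planar_volume_eq)
qed

lemma planar_factorial_snoc:
  "planar_factorial (\<sigma> @ [Node a cs]) = nverts (\<sigma> @ [Node a cs]) * planar_factorial \<sigma> * planar_factorial cs"
  by (simp add: planar_factorial_eq_inverse_volume planar_volume_snoc)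

theorem mainTheorem9:
  fixes \<sigma> :: "'a ptree list"
  shows "planar_factorial \<sigma> =
           (\<Prod>j=1..length \<sigma>. real (nverts (take j \<sigma>))) *
           (\<Prod>j<length \<sigma>. planar_factorial (children (\<sigma> ! j)))"
proof (induction \<sigma> rule: rev_induct)
  case Nil
  then show ?case
    by (simp add: planar_factorial_eq_inverse_volume planar_volume_eq planar_volume_at_def
        fverts_at_Nil_forest order_polytope_empty)
next
  case (snoc t \<sigma>)
  obtain a cs where t: "t = Node a cs"
    by (cases t)
  have "(\<Prod>j<length \<sigma>. planar_factorial (children ((\<sigma> @ [t]) ! j)))
      = (\<Prod>j<length \<sigma>. planar_factorial (children (\<sigma> ! j)))"
    by (rule prod.cong) (simp_all add: nth_append)
  then have children: "(\<Prod>j<length (\<sigma> @ [t]). planar_factorial (children ((\<sigma> @ [t]) ! j)))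
      = (\<Prod>j<length \<sigma>. planar_factorial (children (\<sigma> ! j))) * planar_factorial cs"
    by (simp add: t)
  have sizes: "(\<Prod>j=1..length (\<sigma> @ [t]). real (nverts (take j (\<sigma> @ [t]))))
      = (\<Prod>j=1..length \<sigma>. real (nverts (take j \<sigma>))) * nverts (\<sigma> @ [t])"
    by (simp add: prod.nat_ivl_Suc' mult.commute)
  have "planar_factorial (\<sigma> @ [t]) = nverts (\<sigma> @ [t]) * planar_factorial \<sigma> * planar_factorial cs"
    by (simp add: t planar_factorial_snoc)
  then show ?case
    unfolding children sizes snoc.IH by (simp add: mult_ac)
qed

end
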